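(* Let $f$ be a critically coalescing quadratic rational map with critical points $c_1,c_2$. Then $\mathrm{Deck}(f^2)\cong V_4$, and the three special pairs of $\mathrm{Deck}(f^2)$ are exactly $\mathcal{C}_f=\{c_1,c_2\}$, $f^{-1}(c_1)$ and $f^{-1}(c_2)$.
   Context: A quadratic rational map with critical values $v_1\neq v_2$ is critically coalescing if $f(v_1)=f(v_2)$. $\mathrm{Deck}(F)=\{\tau \text{ Möbius} : F\circ\tau=F\}$. For a group $G\cong V_4$ (Klein four-group) of Möbius transformations, each of its three non-identity elements is an involution with exactly two fixed points in $\hat{\mathbb{C}}$; these three pairs of fixed points (six points in total) are called the special pairs of $G$. *)

theory Defs
  imports "HOL-Computational_Algebra.Polynomial_Factorial" "HOL-Algebra.Elementary_Groups"
begin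

datatype riem = Fin complex | Infty

text \<open>Evaluation on the Riemann sphere of the rational function P/Q
  (intended for coprime P, Q, not both constant).\<close>
fun rat_eval :: "complex poly \<Rightarrow> complex poly \<Rightarrow> riem \<Rightarrow> riem" where
  "rat_eval P Q (Fin z) =
     (if poly Q z = 0 then Infty else Fin (poly P z / poly Q z))"
| "rat_eval P Q Infty =
     (if degree P > degree Q then Infty
      else if degree P = degree Q then Fin (lead_coeff P / lead_coeff Q)
      else Fin 0)"

definition rational_map_deg :: "nat \<Rightarrow> (riem \<Rightarrow> riem) \<Rightarrow> bool" where
  "rational_map_deg n f \<longleftrightarrow>
     (\<exists>P Q. coprime P Q \<and> max (degree P) (degree Q) = n \<and> f = rat_eval P Q)"

definition mobius :: "complex \<Rightarrow> complex \<Rightarrow> complex \<Rightarrow> complex \<Rightarrow> riem \<Rightarrow> riem" where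
  "mobius a b c d = rat_eval [:b, a:] [:d, c:]"

definition is_mobius :: "(riem \<Rightarrow> riem) \<Rightarrow> bool" where
  "is_mobius \<tau> \<longleftrightarrow> (\<exists>a b c d. a * d - b * c \<noteq> 0 \<and> \<tau> = mobius a b c d)"

definition Deck :: "(riem \<Rightarrow> riem) \<Rightarrow> (riem \<Rightarrow> riem) set" where
  "Deck F = {\<tau>. is_mobius \<tau> \<and> F \<circ> \<tau> = F}"

definition Deck_group :: "(riem \<Rightarrow> riem) \<Rightarrow> (riem \<Rightarrow> riem) monoid" where
  "Deck_group F = \<lparr>carrier = Deck F, mult = (\<circ>), one = id\<rparr>"

definition V4 :: "(int \<times> int) monoid" where
  "V4 = integer_mod_group 2 \<times>\<times> integer_mod_group 2"

text \<open>Standard charts of the Riemann sphere: z near a finite point, 1/z near infinity.\<close>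
definition chart_inv :: "riem \<Rightarrow> complex \<Rightarrow> riem" where
  "chart_inv p x = (case p of Fin a \<Rightarrow> Fin x | Infty \<Rightarrow> (if x = 0 then Infty else Fin (1 / x)))"

definition chart :: "riem \<Rightarrow> riem \<Rightarrow> complex" where
  "chart q y = (case q of
      Fin b \<Rightarrow> (case y of Fin w \<Rightarrow> w | Infty \<Rightarrow> 0)
    | Infty \<Rightarrow> (case y of Fin w \<Rightarrow> 1 / w | Infty \<Rightarrow> 0))"

definition chart_pt :: "riem \<Rightarrow> complex" where
  "chart_pt p = (case p of Fin a \<Rightarrow> a | Infty \<Rightarrow> 0)"

definition critical_point :: "(riem \<Rightarrow> riem) \<Rightarrow> riem \<Rightarrow> bool" where
  "critical_point f p \<longleftrightarrow>
     ((\<lambda>x. chart (f p) (f (chart_inv p x))) has_field_derivative 0) (at (chart_pt p))"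

definition fixed_points :: "(riem \<Rightarrow> riem) \<Rightarrow> riem set" where
  "fixed_points \<tau> = {z. \<tau> z = z}"

definition special_pairs :: "(riem \<Rightarrow> riem) set \<Rightarrow> riem set set" where
  "special_pairs G = {fixed_points \<tau> | \<tau>. \<tau> \<in> G \<and> \<tau> \<noteq> id}"

end

theory Submission
  imports Defs
begin

text \<open>In homogeneous coordinates a quadratic rational map lifts to a quadratic map of C^2. In a
  basis a, b of C^2 whose lines are the two critical points the mixed terms vanish, so the lift
  becomes g(x1, x2) = (s x1^2 + u x2^2, t x1^2 + w x2^2) with sw - tu \<noteq> 0, and critical coalescence
  becomes sw + tu = 0. Then det(g(g y), g(g x)) is a nonzero multiple of
  det(y, x) det(y, I x) det(y, S x) det(y, I S x) with I = diag(1, -1) and S = ((0, u), (s, 0)).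
  A Moebius map with matrix N is a deck transformation of f \<circ> f iff this product vanishes
  identically for y = N x; since a product of binary quadratic forms vanishes only if a factor
  does, N is proportional to 1, I, S or I S. These commuting involutions form a Klein four-group,
  and their fixed points are read off from the same quadratic forms: x1 x2 = 0 gives c1, c2, and
  t x1^2 + w x2^2 = 0, s x1^2 + u x2^2 = 0 give the preimages of c1 and c2.\<close>

section \<open>Homogeneous coordinates on the Riemann sphere\<close>

definition pt :: "complex \<times> complex \<Rightarrow> riem" where
  "pt v = (if snd v = 0 then Infty else Fin (fst v / snd v))"

definition det2 :: "complex \<times> complex \<Rightarrow> complex \<times> complex \<Rightarrow> complex" where
  "det2 v w = fst v * snd w - snd v * fst w"

lemma det2_self [simp]: "det2 v v = 0"
  unfolding det2_def by (simp add: mult.commute)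

lemma pt_eq_iff:
  assumes "v \<noteq> (0,0)" "w \<noteq> (0,0)"
  shows "pt v = pt w \<longleftrightarrow> det2 v w = 0"
  using assms by (cases v; cases w) (auto simp: pt_def det2_def field_simps)

lemma pt_scale: "c \<noteq> 0 \<Longrightarrow> pt (c * x, c * y) = pt (x, y)"
  unfolding pt_def by auto

lemma pt_surj: "\<exists>v. v \<noteq> (0,0) \<and> p = pt v"
proof (cases p)
  case (Fin z)
  then show ?thesis by (intro exI[of _ "(z,1)"]) (simp add: pt_def)
next
  case Infty
  then show ?thesis by (intro exI[of _ "(1,0)"]) (simp add: pt_def)
qed

definition lin2 :: "complex \<Rightarrow> complex \<Rightarrow> complex \<Rightarrow> complex \<Rightarrow> complex \<times> complex \<Rightarrow> complex \<times> complex" where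
  "lin2 m1 m2 m3 m4 v = (m1 * fst v + m2 * snd v, m3 * fst v + m4 * snd v)"

lemma det2_lin2: "det2 (lin2 m1 m2 m3 m4 x) (lin2 m1 m2 m3 m4 y) = (m1 * m4 - m2 * m3) * det2 x y"
  unfolding det2_def lin2_def by (simp add: algebra_simps)

lemma lin2_lin2:
  "lin2 n1 n2 n3 n4 (lin2 m1 m2 m3 m4 x) =
   lin2 (n1 * m1 + n2 * m3) (n1 * m2 + n2 * m4) (n3 * m1 + n4 * m3) (n3 * m2 + n4 * m4) x"
  unfolding lin2_def by (simp add: algebra_simps)

lemma lin2_nonzero:
  assumes "m1 * m4 - m2 * m3 \<noteq> 0" "x \<noteq> (0,0)"
  shows "lin2 m1 m2 m3 m4 x \<noteq> (0,0)"
proof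
  assume "lin2 m1 m2 m3 m4 x = (0,0)"
  then have "det2 x y = 0" for y
    using det2_lin2[of m1 m2 m3 m4 x y] assms(1) by (simp add: det2_def)
  from this[of "(1,0)"] this[of "(0,1)"] show False
    using assms(2) by (cases x) (simp add: det2_def)
qed

text \<open>The coefficients are listed in the order x1^2, x1 x2, x2^2.\<close>
definition qform :: "complex \<Rightarrow> complex \<Rightarrow> complex \<Rightarrow> complex \<times> complex \<Rightarrow> complex" where
  "qform c2 c1 c0 v = c2 * fst v ^ 2 + c1 * fst v * snd v + c0 * snd v ^ 2"

lemma det2_lin2_lin2:
  "det2 (lin2 n1 n2 n3 n4 x) (lin2 m1 m2 m3 m4 x) =
   qform (n1 * m3 - n3 * m1) (n1 * m4 + n2 * m3 - n3 * m2 - n4 * m1) (n2 * m4 - n4 * m2) x"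
  unfolding det2_def lin2_def qform_def by (simp add: algebra_simps power2_eq_square)

lemma qform_poly: "qform c2 c1 c0 (z, 1) = poly [:c0, c1, c2:] z"
  unfolding qform_def by (simp add: algebra_simps power2_eq_square)

lemma qform_eq_zero_iff: "(\<forall>x. x \<noteq> (0,0) \<longrightarrow> qform c2 c1 c0 x = 0) \<longleftrightarrow> c2 = 0 \<and> c1 = 0 \<and> c0 = 0"
proof
  assume "\<forall>x. x \<noteq> (0,0) \<longrightarrow> qform c2 c1 c0 x = 0"
  then have "poly [:c0, c1, c2:] z = 0" for z
    using qform_poly by (metis zero_neq_one prod.inject)
  then show "c2 = 0 \<and> c1 = 0 \<and> c0 = 0"
    using poly_all_0_iff_0 by (metis pCons_eq_0_iff)
qed (simp add: qform_def)

lemma is_mobius_id: "is_mobius id"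
proof -
  have "mobius 1 0 0 1 = id"
  proof
    show "mobius 1 0 0 1 p = id p" for p by (cases p) (simp_all add: mobius_def)
  qed
  moreover have "(1::complex) * 1 - 0 * 0 \<noteq> 0" by simp
  ultimately show ?thesis unfolding is_mobius_def by metis
qed

lemma mobius_pt:
  assumes "m1 * m4 - m2 * m3 \<noteq> 0" "v \<noteq> (0,0)"
  shows "mobius m1 m2 m3 m4 (pt v) = pt (lin2 m1 m2 m3 m4 v)"
proof -
  obtain x y where v: "v = (x,y)" by force
  show ?thesis
  proof (cases "y = 0")
    case False
    have "pt (lin2 m1 m2 m3 m4 v) = pt (m1 * (x/y) + m2, m3 * (x/y) + m4)"
      using pt_scale[of y "m1 * (x/y) + m2" "m3 * (x/y) + m4"] False
      by (simp add: v lin2_def algebra_simps)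
    then show ?thesis
      using False by (simp add: v mobius_def pt_def algebra_simps)
  next
    case True
    then have "x \<noteq> 0" using assms v by auto
    then have "pt (lin2 m1 m2 m3 m4 v) = pt (m1, m3)"
      using pt_scale[of x m1 m3] True by (simp add: v lin2_def mult.commute)
    then show ?thesis
      using True assms(1) by (auto simp: v mobius_def pt_def)
  qed
qed

section \<open>Coordinates with respect to a unimodular basis\<close>

definition lincomb :: "complex \<times> complex \<Rightarrow> complex \<times> complex \<Rightarrow> complex \<times> complex \<Rightarrow> complex \<times> complex" where
  "lincomb a b = lin2 (fst a) (fst b) (snd a) (snd b)"

definition coord_pt :: "complex \<times> complex \<Rightarrow> complex \<times> complex \<Rightarrow> complex \<times> complex \<Rightarrow> riem" where
  "coord_pt a b x = pt (lincomb a b x)"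

lemma det2_lincomb: "det2 (lincomb a b x) (lincomb a b y) = det2 a b * det2 x y"
  unfolding lincomb_def lin2_def det2_def by (simp add: algebra_simps)

lemma lincomb_nonzero: "det2 a b \<noteq> 0 \<Longrightarrow> x \<noteq> (0,0) \<Longrightarrow> lincomb a b x \<noteq> (0,0)"
  using lin2_nonzero[of "fst a" "snd b" "fst b" "snd a" x] unfolding lincomb_def det2_def
  by (simp add: mult.commute)

lemma lincomb_coords:
  assumes "det2 a b = 1"
  shows "lincomb a b (det2 v b, det2 a v) = v"
proof -
  have "lincomb a b (det2 v b, det2 a v) = (det2 a b * fst v, det2 a b * snd v)"
    unfolding lincomb_def lin2_def det2_def by (simp add: algebra_simps)
  then show ?thesis using assms by simp
qed

lemma coord_pt_basis: "coord_pt a b (1,0) = pt a" "coord_pt a b (0,1) = pt b"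
  unfolding coord_pt_def lincomb_def lin2_def by simp_all

lemma coord_pt_eq_iff:
  assumes "det2 a b = 1" "x \<noteq> (0,0)" "y \<noteq> (0,0)"
  shows "coord_pt a b x = coord_pt a b y \<longleftrightarrow> det2 x y = 0"
  using assms det2_lincomb[of a b x y] lincomb_nonzero[of a b] pt_eq_iff
  unfolding coord_pt_def by simp

lemma coord_pt_surj:
  assumes "det2 a b = 1"
  obtains x where "x \<noteq> (0,0)" "p = coord_pt a b x"
proof -
  obtain v where v: "v \<noteq> (0,0)" "p = pt v" using pt_surj by blast
  moreover have "lincomb a b (0,0) = (0,0)" by (simp add: lincomb_def lin2_def)
  ultimately have "(det2 v b, det2 a v) \<noteq> (0,0)"
    using lincomb_coords[OF assms, of v] by metis
  then show ?thesis
    using that v lincomb_coords[OF assms, of v] unfolding coord_pt_def by metis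
qed

lemma coord_pt_ext:
  assumes "det2 a b = 1" "\<And>x. x \<noteq> (0,0) \<Longrightarrow> F (coord_pt a b x) = G (coord_pt a b x)"
  shows "F = G"
proof
  fix p
  obtain x where "x \<noteq> (0,0)" "p = coord_pt a b x" using coord_pt_surj[OF assms(1)] .
  then show "F p = G p" using assms(2) by simp
qed

lemma coord_pt_set_eqI:
  assumes "det2 a b = 1" "\<And>x. x \<noteq> (0,0) \<Longrightarrow> coord_pt a b x \<in> A \<longleftrightarrow> coord_pt a b x \<in> B"
  shows "A = B"
proof (rule Set.set_eqI)
  show "p \<in> A \<longleftrightarrow> p \<in> B" for p
    using coord_pt_surj[OF assms(1)] assms(2) by metis
qed

definition linear_in_basis ::
    "complex \<times> complex \<Rightarrow> complex \<times> complex \<Rightarrow> (riem \<Rightarrow> riem) \<Rightarrow>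
     complex \<Rightarrow> complex \<Rightarrow> complex \<Rightarrow> complex \<Rightarrow> bool" where
  "linear_in_basis a b \<tau> m1 m2 m3 m4 \<longleftrightarrow> m1 * m4 - m2 * m3 \<noteq> 0 \<and>
     (\<forall>x. x \<noteq> (0,0) \<longrightarrow> \<tau> (coord_pt a b x) = coord_pt a b (lin2 m1 m2 m3 m4 x))"

lemma linear_in_basisD:
  assumes "linear_in_basis a b \<tau> m1 m2 m3 m4"
  shows "m1 * m4 - m2 * m3 \<noteq> 0"
    and "x \<noteq> (0,0) \<Longrightarrow> \<tau> (coord_pt a b x) = coord_pt a b (lin2 m1 m2 m3 m4 x)"
  using assms unfolding linear_in_basis_def by blast+

lemma linear_in_basis_id: "linear_in_basis a b id 1 0 0 1"
  unfolding linear_in_basis_def lin2_def by simp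

lemma linear_in_basis_comp:
  assumes \<tau>: "linear_in_basis a b \<tau> n1 n2 n3 n4" and \<rho>: "linear_in_basis a b \<rho> m1 m2 m3 m4"
  shows "linear_in_basis a b (\<tau> \<circ> \<rho>)
    (n1 * m1 + n2 * m3) (n1 * m2 + n2 * m4) (n3 * m1 + n4 * m3) (n3 * m2 + n4 * m4)"
  unfolding linear_in_basis_def
proof (intro conjI allI impI)
  have "(n1 * m1 + n2 * m3) * (n3 * m2 + n4 * m4) - (n1 * m2 + n2 * m4) * (n3 * m1 + n4 * m3)
      = (n1 * n4 - n2 * n3) * (m1 * m4 - m2 * m3)"
    by (simp add: algebra_simps)
  then show "(n1 * m1 + n2 * m3) * (n3 * m2 + n4 * m4) - (n1 * m2 + n2 * m4) * (n3 * m1 + n4 * m3) \<noteq> 0"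
    using linear_in_basisD(1)[OF \<tau>] linear_in_basisD(1)[OF \<rho>] by simp
next
  fix x :: "complex \<times> complex"
  assume "x \<noteq> (0,0)"
  moreover have "lin2 m1 m2 m3 m4 x \<noteq> (0,0)"
    using calculation linear_in_basisD(1)[OF \<rho>] lin2_nonzero by blast
  ultimately show "(\<tau> \<circ> \<rho>) (coord_pt a b x) = coord_pt a b (lin2
      (n1 * m1 + n2 * m3) (n1 * m2 + n2 * m4) (n3 * m1 + n4 * m3) (n3 * m2 + n4 * m4) x)"
    using linear_in_basisD(2)[OF \<tau>] linear_in_basisD(2)[OF \<rho>] by (simp add: lin2_lin2)
qed

lemma linear_in_basis_eq_iff:
  assumes "det2 a b = 1" "linear_in_basis a b \<tau> n1 n2 n3 n4" "linear_in_basis a b \<rho> m1 m2 m3 m4"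
  shows "\<tau> = \<rho> \<longleftrightarrow>
    n1 * m3 - n3 * m1 = 0 \<and> n1 * m4 + n2 * m3 - n3 * m2 - n4 * m1 = 0 \<and> n2 * m4 - n4 * m2 = 0"
proof -
  have "\<tau> (coord_pt a b x) = \<rho> (coord_pt a b x) \<longleftrightarrow>
      det2 (lin2 n1 n2 n3 n4 x) (lin2 m1 m2 m3 m4 x) = 0" if x: "x \<noteq> (0,0)" for x
  proof -
    have "lin2 n1 n2 n3 n4 x \<noteq> (0,0)" "lin2 m1 m2 m3 m4 x \<noteq> (0,0)"
      using linear_in_basisD(1)[OF assms(2)] linear_in_basisD(1)[OF assms(3)] x lin2_nonzero by blast+
    then show ?thesis
      using linear_in_basisD(2)[OF assms(2) x] linear_in_basisD(2)[OF assms(3) x]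
        coord_pt_eq_iff[OF assms(1)] by simp
  qed
  then have "\<tau> = \<rho> \<longleftrightarrow> (\<forall>x. x \<noteq> (0,0) \<longrightarrow> det2 (lin2 n1 n2 n3 n4 x) (lin2 m1 m2 m3 m4 x) = 0)"
    using coord_pt_ext[OF assms(1)] by metis
  then show ?thesis
    unfolding det2_lin2_lin2 qform_eq_zero_iff .
qed

lemma linear_in_basis_fixed_iff:
  assumes "det2 a b = 1" "linear_in_basis a b \<tau> m1 m2 m3 m4" "x \<noteq> (0,0)"
  shows "\<tau> (coord_pt a b x) = coord_pt a b x \<longleftrightarrow> det2 (lin2 m1 m2 m3 m4 x) x = 0"
proof -
  have "lin2 m1 m2 m3 m4 x \<noteq> (0,0)"
    using linear_in_basisD(1)[OF assms(2)] assms(3) lin2_nonzero by blast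
  then show ?thesis
    using linear_in_basisD(2)[OF assms(2,3)] coord_pt_eq_iff[OF assms(1)] assms(3) by simp
qed

text \<open>The Moebius map whose matrix is B N B^-1, where B has columns a and b.\<close>
definition basis_mobius ::
    "complex \<times> complex \<Rightarrow> complex \<times> complex \<Rightarrow> complex \<Rightarrow> complex \<Rightarrow> complex \<Rightarrow> complex \<Rightarrow> riem \<Rightarrow> riem" where
  "basis_mobius a b n1 n2 n3 n4 = mobius
     (fst a * (n1 * snd b - n2 * snd a) + fst b * (n3 * snd b - n4 * snd a))
     (fst a * (n2 * fst a - n1 * fst b) + fst b * (n4 * fst a - n3 * fst b))
     (snd a * (n1 * snd b - n2 * snd a) + snd b * (n3 * snd b - n4 * snd a))
     (snd a * (n2 * fst a - n1 * fst b) + snd b * (n4 * fst a - n3 * fst b))"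

lemma basis_mobius:
  assumes "det2 a b = 1" "n1 * n4 - n2 * n3 \<noteq> 0"
  shows "is_mobius (basis_mobius a b n1 n2 n3 n4)"
    and "linear_in_basis a b (basis_mobius a b n1 n2 n3 n4) n1 n2 n3 n4"
proof -
  obtain a1 a2 b1 b2 where ab: "a = (a1,a2)" "b = (b1,b2)" by force
  define m1 where "m1 = a1 * (n1 * b2 - n2 * a2) + b1 * (n3 * b2 - n4 * a2)"
  define m2 where "m2 = a1 * (n2 * a1 - n1 * b1) + b1 * (n4 * a1 - n3 * b1)"
  define m3 where "m3 = a2 * (n1 * b2 - n2 * a2) + b2 * (n3 * b2 - n4 * a2)"
  define m4 where "m4 = a2 * (n2 * a1 - n1 * b1) + b2 * (n4 * a1 - n3 * b1)"
  have eq: "basis_mobius a b n1 n2 n3 n4 = mobius m1 m2 m3 m4"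
    unfolding basis_mobius_def m1_def m2_def m3_def m4_def ab by simp
  have "m1 * m4 - m2 * m3 = (n1 * n4 - n2 * n3) * det2 a b ^ 2"
    unfolding m1_def m2_def m3_def m4_def det2_def ab by (simp add: algebra_simps power2_eq_square)
  then have det: "m1 * m4 - m2 * m3 \<noteq> 0" using assms by simp
  then show "is_mobius (basis_mobius a b n1 n2 n3 n4)"
    unfolding eq is_mobius_def by blast
  have "lin2 m1 m2 m3 m4 (lincomb a b x) =
      (det2 a b * fst (lincomb a b (lin2 n1 n2 n3 n4 x)), det2 a b * snd (lincomb a b (lin2 n1 n2 n3 n4 x)))" for x
    unfolding m1_def m2_def m3_def m4_def lincomb_def lin2_def det2_def ab
    by (cases x) (simp add: algebra_simps)
  then have "lin2 m1 m2 m3 m4 (lincomb a b x) = lincomb a b (lin2 n1 n2 n3 n4 x)" for x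
    using assms(1) by simp
  moreover have "lincomb a b x \<noteq> (0,0)" if "x \<noteq> (0,0)" for x
    using lincomb_nonzero assms(1) that by simp
  ultimately show "linear_in_basis a b (basis_mobius a b n1 n2 n3 n4) n1 n2 n3 n4"
    using assms(2) mobius_pt[OF det] unfolding linear_in_basis_def eq coord_pt_def by simp
qed

lemma mobius_linear_in_basis:
  assumes "det2 a b = 1" "is_mobius \<tau>"
  obtains n1 n2 n3 n4 where "linear_in_basis a b \<tau> n1 n2 n3 n4"
proof -
  obtain m1 m2 m3 m4 where det: "m1 * m4 - m2 * m3 \<noteq> 0" and \<tau>: "\<tau> = mobius m1 m2 m3 m4"
    using assms(2) unfolding is_mobius_def by blast
  define M where "M = lin2 m1 m2 m3 m4"
  \<comment> \<open>the coordinates of the images of the basis vectors\<close>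
  define n1 n2 n3 n4 where "n1 = det2 (M a) b" "n2 = det2 (M b) b" "n3 = det2 a (M a)" "n4 = det2 a (M b)"
  obtain a1 a2 b1 b2 where ab: "a = (a1,a2)" "b = (b1,b2)" by force
  have "n1 * n4 - n2 * n3 = (m1 * m4 - m2 * m3) * det2 a b ^ 2"
    unfolding n1_n2_n3_n4_def M_def lin2_def det2_def ab by (simp add: algebra_simps power2_eq_square)
  then have detN: "n1 * n4 - n2 * n3 \<noteq> 0" using assms(1) det by simp
  have "lin2 n1 n2 n3 n4 x = (det2 (M (lincomb a b x)) b, det2 a (M (lincomb a b x)))" for x
    unfolding n1_n2_n3_n4_def M_def lincomb_def lin2_def det2_def ab
    by (cases x) (simp add: algebra_simps)
  then have "lincomb a b (lin2 n1 n2 n3 n4 x) = M (lincomb a b x)" for x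
    using lincomb_coords[OF assms(1)] by simp
  moreover have "lincomb a b x \<noteq> (0,0)" if "x \<noteq> (0,0)" for x
    using lincomb_nonzero assms(1) that by simp
  ultimately have "linear_in_basis a b \<tau> n1 n2 n3 n4"
    using detN mobius_pt[OF det] unfolding linear_in_basis_def \<tau> coord_pt_def M_def by simp
  then show ?thesis using that by blast
qed

section \<open>Quadratic rational maps in homogeneous coordinates\<close>

definition homogeneous_lift :: "(riem \<Rightarrow> riem) \<Rightarrow> (complex \<times> complex \<Rightarrow> complex \<times> complex) \<Rightarrow> bool" where
  "homogeneous_lift f F \<longleftrightarrow> (\<forall>v. v \<noteq> (0,0) \<longrightarrow> F v \<noteq> (0,0) \<and> f (pt v) = pt (F v))"

lemma qform_dehomogenize: "y \<noteq> 0 \<Longrightarrow> qform c2 c1 c0 (x, y) = y^2 * qform c2 c1 c0 (x/y, 1)"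
  unfolding qform_def by (simp add: field_simps power2_eq_square)

lemma qform_infinity: "qform c2 c1 c0 (x, 0) = x^2 * c2"
  unfolding qform_def by simp

lemma poly_eq_qform:
  fixes P :: "complex poly"
  assumes "degree P \<le> 2"
  shows "poly P z = qform (coeff P 2) (coeff P 1) (coeff P 0) (z, 1)"
proof -
  have "P = [:coeff P 0, coeff P 1, coeff P 2:]"
  proof (rule poly_eqI)
    show "coeff P n = coeff [:coeff P 0, coeff P 1, coeff P 2:] n" for n
      using assms by (cases n; cases "n - 1")
        (auto simp: coeff_pCons coeff_eq_0 numeral_2_eq_2 split: nat.split)
  qed
  then show ?thesis by (metis qform_poly)
qed

lemma degree_eq_2_iff:
  fixes P :: "complex poly"
  assumes "degree P \<le> 2"
  shows "degree P = 2 \<longleftrightarrow> coeff P 2 \<noteq> 0"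
proof
  assume "degree P = 2"
  then show "coeff P 2 \<noteq> 0" by (metis leading_coeff_0_iff zero_neq_numeral degree_0)
next
  assume "coeff P 2 \<noteq> 0"
  then show "degree P = 2" using assms le_degree[of P 2] by simp
qed

lemma coprime_no_common_root:
  fixes P Q :: "complex poly"
  assumes "coprime P Q" "poly P z = 0" "poly Q z = 0"
  shows False
proof -
  have "[:-z,1:] dvd P" "[:-z,1:] dvd Q" using assms by (simp_all add: poly_eq_0_iff_dvd)
  then have "is_unit [:-z,1:]" using assms(1) coprime_common_divisor by blast
  then show False by (simp add: is_unit_poly_iff)
qed

lemma rational_map_deg_2_lift:
  assumes "rational_map_deg 2 f"
  obtains p2 p1 p0 q2 q1 q0
  where "homogeneous_lift f (\<lambda>v. (qform p2 p1 p0 v, qform q2 q1 q0 v))"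
proof -
  obtain P Q where cop: "coprime P Q" and deg: "max (degree P) (degree Q) = 2" and f: "f = rat_eval P Q"
    using assms unfolding rational_map_deg_def by blast
  have dP: "degree P \<le> 2" and dQ: "degree Q \<le> 2" using deg by auto
  define F where "F v = (qform (coeff P 2) (coeff P 1) (coeff P 0) v, qform (coeff Q 2) (coeff Q 1) (coeff Q 0) v)" for v
  have "degree P = 2 \<or> degree Q = 2" using deg by linarith
  then have lead: "(coeff P 2, coeff Q 2) \<noteq> (0,0)"
    using degree_eq_2_iff[OF dP] degree_eq_2_iff[OF dQ] by auto
  have "F v \<noteq> (0,0) \<and> f (pt v) = pt (F v)" if v: "v \<noteq> (0,0)" for v
  proof -
    obtain x y where xy: "v = (x,y)" by force
    show ?thesis
    proof (cases "y = 0")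
      case False
      have F: "F v = (y^2 * poly P (x/y), y^2 * poly Q (x/y))"
        unfolding F_def xy using poly_eq_qform[OF dP] poly_eq_qform[OF dQ] qform_dehomogenize[OF False] by simp
      then have "pt (F v) = pt (poly P (x/y), poly Q (x/y))"
        using False pt_scale by simp
      moreover have "f (pt v) = pt (poly P (x/y), poly Q (x/y))"
        using False coprime_no_common_root[OF cop] by (simp add: f xy pt_def)
      moreover have "(poly P (x/y), poly Q (x/y)) \<noteq> (0,0)"
        using coprime_no_common_root[OF cop] by auto
      ultimately show ?thesis
        using False F by simp
    next
      case True
      then have x: "x \<noteq> 0" using v xy by simp
      have F: "F v = (x^2 * coeff P 2, x^2 * coeff Q 2)"
        unfolding F_def xy True by (simp add: qform_infinity)
      have "rat_eval P Q Infty = pt (coeff P 2, coeff Q 2)"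
        using deg dP dQ degree_eq_2_iff[OF dP] degree_eq_2_iff[OF dQ]
        by (cases "degree P = 2"; cases "degree Q = 2") (simp_all add: pt_def)
      then show ?thesis
        using F x lead pt_scale True by (simp add: f xy pt_def)
    qed
  qed
  then show ?thesis using that unfolding homogeneous_lift_def F_def by blast
qed

section \<open>Critical points and the normal form\<close>

lemma DERIV_quotient_zero:
  fixes N D :: "complex \<Rightarrow> complex"
  assumes "((\<lambda>t. N t / D t) has_field_derivative 0) (at t0)"
    and "(N has_field_derivative N') (at t0)" "(D has_field_derivative D') (at t0)" "D t0 \<noteq> 0"
  shows "N' * D t0 - N t0 * D' = 0"
proof -
  have "((\<lambda>t. N t / D t) has_field_derivative (N' * D t0 - N t0 * D') / (D t0 * D t0)) (at t0)"
    using DERIV_divide[OF assms(2-4)] .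
  then have "(N' * D t0 - N t0 * D') / (D t0 * D t0) = 0"
    using DERIV_unique assms(1) by blast
  then show ?thesis using assms(4) by simp
qed

lemma chart_Fin_pt: "chart (Fin b) (pt w) = fst w / snd w"
  unfolding chart_def pt_def by simp

lemma chart_Infty_pt: "chart Infty (pt w) = snd w / fst w"
  unfolding chart_def pt_def by simp

text \<open>In the chart at the image point the curve t \<mapsto> pt (N t, D t) is N/D or D/N.\<close>
lemma chart_pt_DERIV_zero:
  fixes N D :: "complex \<Rightarrow> complex"
  assumes crit: "((\<lambda>t. chart (pt (N t0, D t0)) (pt (N t, D t))) has_field_derivative 0) (at t0)"
    and N: "(N has_field_derivative N') (at t0)" and D: "(D has_field_derivative D') (at t0)"
    and nz: "(N t0, D t0) \<noteq> (0,0)"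
  shows "N' * D t0 - N t0 * D' = 0"
proof (cases "D t0 = 0")
  case False
  then have "pt (N t0, D t0) = Fin (N t0 / D t0)" by (simp add: pt_def)
  then have "((\<lambda>t. N t / D t) has_field_derivative 0) (at t0)"
    using crit by (simp add: chart_Fin_pt)
  from DERIV_quotient_zero[OF this N D False] show ?thesis .
next
  case True
  then have "N t0 \<noteq> 0" using nz by simp
  moreover have "pt (N t0, D t0) = Infty" using True by (simp add: pt_def)
  then have "((\<lambda>t. D t / N t) has_field_derivative 0) (at t0)"
    using crit by (simp add: chart_Infty_pt)
  ultimately have "D' * N t0 - D t0 * N' = 0"
    using DERIV_quotient_zero[OF _ D N] by blast
  then show ?thesis by (simp add: algebra_simps)
qed

text \<open>The Jacobian determinant of v \<mapsto> (qform p2 p1 p0 v, qform q2 q1 q0 v), itself a binary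
  quadratic form.\<close>
definition jacobian ::
    "complex \<Rightarrow> complex \<Rightarrow> complex \<Rightarrow> complex \<Rightarrow> complex \<Rightarrow> complex \<Rightarrow> complex \<times> complex \<Rightarrow> complex" where
  "jacobian p2 p1 p0 q2 q1 q0 =
     qform (2 * (p2 * q1 - p1 * q2)) (4 * (p2 * q0 - p0 * q2)) (2 * (p1 * q0 - p0 * q1))"

lemma critical_point_Fin_jacobian:
  assumes lift: "homogeneous_lift f (\<lambda>v. (qform p2 p1 p0 v, qform q2 q1 q0 v))"
    and crit: "critical_point f (Fin a)"
  shows "jacobian p2 p1 p0 q2 q1 q0 (a,1) = 0"
proof -
  have f: "f (pt (t,1)) = pt (qform p2 p1 p0 (t,1), qform q2 q1 q0 (t,1))" for t
    using lift unfolding homogeneous_lift_def by simp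
  have nz: "(qform p2 p1 p0 (a,1), qform q2 q1 q0 (a,1)) \<noteq> (0,0)"
    using lift unfolding homogeneous_lift_def by simp
  have "chart_inv (Fin a) t = pt (t, 1)" for t
    by (simp add: chart_inv_def pt_def)
  then have "((\<lambda>t. chart (pt (qform p2 p1 p0 (a,1), qform q2 q1 q0 (a,1)))
      (pt (qform p2 p1 p0 (t,1), qform q2 q1 q0 (t,1)))) has_field_derivative 0) (at a)"
    using crit f[of a] f pt_def[of "(a,1)"] unfolding critical_point_def by (simp add: chart_pt_def)
  moreover have "((\<lambda>t. qform c2 c1 c0 (t,1)) has_field_derivative (2*c2*a + c1)) (at a)" for c2 c1 c0
    unfolding qform_def by (auto intro!: derivative_eq_intros)
  ultimately have "(2*p2*a + p1) * qform q2 q1 q0 (a,1) - qform p2 p1 p0 (a,1) * (2*q2*a + q1) = 0"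
    using chart_pt_DERIV_zero[where N = "\<lambda>t. qform p2 p1 p0 (t,1)" and D = "\<lambda>t. qform q2 q1 q0 (t,1)"] nz
    by simp
  moreover have "jacobian p2 p1 p0 q2 q1 q0 (a,1) =
      2 * ((2*p2*a + p1) * qform q2 q1 q0 (a,1) - qform p2 p1 p0 (a,1) * (2*q2*a + q1))"
    unfolding jacobian_def qform_def by (simp add: algebra_simps power2_eq_square)
  ultimately show ?thesis by simp
qed

lemma critical_point_Infty_jacobian:
  assumes lift: "homogeneous_lift f (\<lambda>v. (qform p2 p1 p0 v, qform q2 q1 q0 v))"
    and crit: "critical_point f Infty"
  shows "jacobian p2 p1 p0 q2 q1 q0 (1,0) = 0"
proof -
  have f: "f (pt (1,t)) = pt (qform p2 p1 p0 (1,t), qform q2 q1 q0 (1,t))" for t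
    using lift unfolding homogeneous_lift_def by simp
  have nz: "(qform p2 p1 p0 (1,0), qform q2 q1 q0 (1,0)) \<noteq> (0,0)"
    using lift unfolding homogeneous_lift_def by simp
  have "chart_inv Infty t = pt (1, t)" for t
    by (simp add: chart_inv_def pt_def)
  then have "((\<lambda>t. chart (pt (qform p2 p1 p0 (1,0), qform q2 q1 q0 (1,0)))
      (pt (qform p2 p1 p0 (1,t), qform q2 q1 q0 (1,t)))) has_field_derivative 0) (at 0)"
    using crit f[of 0] f pt_def[of "(1,0)"] unfolding critical_point_def by (simp add: chart_pt_def)
  moreover have "((\<lambda>t. qform c2 c1 c0 (1,t)) has_field_derivative c1) (at 0)" for c2 c1 c0
    unfolding qform_def by (auto intro!: derivative_eq_intros)
  ultimately have "p1 * qform q2 q1 q0 (1,0) - qform p2 p1 p0 (1,0) * q1 = 0"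
    using chart_pt_DERIV_zero[where N = "\<lambda>t. qform p2 p1 p0 (1,t)" and D = "\<lambda>t. qform q2 q1 q0 (1,t)"] nz
    by simp
  then show ?thesis
    unfolding jacobian_def qform_def by (simp add: algebra_simps)
qed

lemma critical_point_jacobian:
  assumes lift: "homogeneous_lift f (\<lambda>v. (qform p2 p1 p0 v, qform q2 q1 q0 v))"
    and v: "v \<noteq> (0,0)" and crit: "critical_point f (pt v)"
  shows "jacobian p2 p1 p0 q2 q1 q0 v = 0"
proof -
  obtain x y where xy: "v = (x,y)" by force
  show ?thesis
  proof (cases "y = 0")
    case False
    then have "pt v = Fin (x/y)" by (simp add: xy pt_def)
    then show ?thesis
      using critical_point_Fin_jacobian[OF lift] crit False
      unfolding xy jacobian_def qform_dehomogenize[OF False] by simp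
  next
    case True
    then have "pt v = Infty" by (simp add: xy pt_def)
    then show ?thesis
      using critical_point_Infty_jacobian[OF lift] crit True
      unfolding xy jacobian_def by (simp add: qform_infinity)
  qed
qed

lemma unimodular_basis:
  assumes "p \<noteq> q"
  obtains a b where "det2 a b = 1" "p = pt a" "q = pt b"
proof -
  obtain a b0 where a: "a \<noteq> (0,0)" "p = pt a" and b0: "b0 \<noteq> (0,0)" "q = pt b0"
    using pt_surj by metis
  then have D: "det2 a b0 \<noteq> 0" using assms pt_eq_iff by auto
  define b where "b = (fst b0 / det2 a b0, snd b0 / det2 a b0)"
  have "det2 a b = det2 a b0 / det2 a b0"
    unfolding b_def det2_def by (simp only: fst_conv snd_conv times_divide_eq_right diff_divide_distrib)
  then have "det2 a b = 1" using D by simp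
  moreover have "q = pt b"
    using b0 D pt_scale[of "1 / det2 a b0" "fst b0" "snd b0"] unfolding b_def by (cases b0) simp
  ultimately show ?thesis using that a by blast
qed

definition polar :: "complex \<Rightarrow> complex \<Rightarrow> complex \<Rightarrow> complex \<times> complex \<Rightarrow> complex \<times> complex \<Rightarrow> complex" where
  "polar c2 c1 c0 a b = 2*c2*fst a*fst b + c1*(fst a*snd b + snd a*fst b) + 2*c0*snd a*snd b"

lemma qform_lincomb:
  "qform c2 c1 c0 (lincomb a b x) =
     fst x ^ 2 * qform c2 c1 c0 a + fst x * snd x * polar c2 c1 c0 a b + snd x ^ 2 * qform c2 c1 c0 b"
  unfolding qform_def polar_def lincomb_def lin2_def by (simp add: algebra_simps power2_eq_square)

text \<open>If two critical points have distinct critical values, the mixed terms of the map written in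
  the basis formed by them vanish.\<close>
lemma polar_eq_zero_if_jacobian_eq_zero:
  assumes "jacobian p2 p1 p0 q2 q1 q0 a = 0" "jacobian p2 p1 p0 q2 q1 q0 b = 0"
    and "det2 (qform p2 p1 p0 a, qform q2 q1 q0 a) (qform p2 p1 p0 b, qform q2 q1 q0 b) \<noteq> 0"
  shows "polar p2 p1 p0 a b = 0" "polar q2 q1 q0 a b = 0"
proof -
  define A1 A2 B1 B2 XP XQ where "A1 = qform p2 p1 p0 a" "A2 = qform q2 q1 q0 a"
    "B1 = qform p2 p1 p0 b" "B2 = qform q2 q1 q0 b" "XP = polar p2 p1 p0 a b" "XQ = polar q2 q1 q0 a b"
  have "det2 a b * jacobian p2 p1 p0 q2 q1 q0 a = 2 * (A1 * XQ - XP * A2)"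
    "det2 a b * jacobian p2 p1 p0 q2 q1 q0 b = 2 * (XP * B2 - B1 * XQ)"
    unfolding A1_A2_B1_B2_XP_XQ_def jacobian_def qform_def polar_def det2_def
    by (simp_all add: algebra_simps power2_eq_square)
  then have e: "A1 * XQ - XP * A2 = 0" "XP * B2 - B1 * XQ = 0" using assms(1,2) by simp_all
  have det: "A1 * B2 - A2 * B1 \<noteq> 0"
    using assms(3) unfolding A1_A2_B1_B2_XP_XQ_def det2_def by simp
  have "XP * (A1 * B2 - A2 * B1) = A1 * (XP * B2 - B1 * XQ) + B1 * (A1 * XQ - XP * A2)"
    "XQ * (A1 * B2 - A2 * B1) = A2 * (XP * B2 - B1 * XQ) + B2 * (A1 * XQ - XP * A2)"
    by (simp_all add: algebra_simps)
  then show "polar p2 p1 p0 a b = 0" "polar q2 q1 q0 a b = 0"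
    using e det unfolding A1_A2_B1_B2_XP_XQ_def by simp_all
qed

definition normal_quad :: "complex \<Rightarrow> complex \<Rightarrow> complex \<Rightarrow> complex \<Rightarrow> complex \<times> complex \<Rightarrow> complex \<times> complex" where
  "normal_quad s t u w x = (s * fst x ^ 2 + u * snd x ^ 2, t * fst x ^ 2 + w * snd x ^ 2)"

locale quadratic_normal_form =
  fixes f :: "riem \<Rightarrow> riem" and a b :: "complex \<times> complex" and s t u w :: complex
  assumes unimodular: "det2 a b = 1"
    and nondegenerate: "s * w - t * u \<noteq> 0"
    and lift: "x \<noteq> (0,0) \<Longrightarrow> f (coord_pt a b x) = coord_pt a b (normal_quad s t u w x)"

lemma lift_in_polar_free_basis:
  assumes "det2 a b = 1" "polar p2 p1 p0 a b = 0" "polar q2 q1 q0 a b = 0"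
  defines "F \<equiv> \<lambda>v. (qform p2 p1 p0 v, qform q2 q1 q0 v)"
  shows "F (lincomb a b x) =
    lincomb a b (normal_quad (det2 (F a) b) (det2 a (F a)) (det2 (F b) b) (det2 a (F b)) x)"
proof -
  define s t u w where "s = det2 (F a) b" "t = det2 a (F a)" "u = det2 (F b) b" "w = det2 a (F b)"
  have F: "F a = lincomb a b (s,t)" "F b = lincomb a b (u,w)"
    using lincomb_coords[OF assms(1)] unfolding s_t_u_w_def by simp_all
  have "F (lincomb a b x) =
      (fst x^2 * fst (F a) + snd x^2 * fst (F b), fst x^2 * snd (F a) + snd x^2 * snd (F b))"
    using assms(2,3) by (simp add: F_def qform_lincomb)
  also have "\<dots> = lincomb a b (normal_quad s t u w x)"
    unfolding F lincomb_def lin2_def normal_quad_def by (simp add: algebra_simps)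
  finally show ?thesis unfolding s_t_u_w_def .
qed

lemma critical_normal_form:
  assumes quad: "rational_map_deg 2 f"
    and crit: "critical_point f c\<^sub>1" "critical_point f c\<^sub>2" and distinct: "f c\<^sub>1 \<noteq> f c\<^sub>2"
  obtains a b s t u w where "quadratic_normal_form f a b s t u w"
    "c\<^sub>1 = coord_pt a b (1,0)" "c\<^sub>2 = coord_pt a b (0,1)"
proof -
  obtain p2 p1 p0 q2 q1 q0
    where lift: "homogeneous_lift f (\<lambda>v. (qform p2 p1 p0 v, qform q2 q1 q0 v))"
    using rational_map_deg_2_lift[OF quad] .
  define F where "F v = (qform p2 p1 p0 v, qform q2 q1 q0 v)" for v
  have F: "F v \<noteq> (0,0)" "f (pt v) = pt (F v)" if "v \<noteq> (0,0)" for v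
    using lift that unfolding homogeneous_lift_def F_def by blast+
  obtain a b where D: "det2 a b = 1" and c: "c\<^sub>1 = pt a" "c\<^sub>2 = pt b"
    using distinct unimodular_basis by metis
  then have nz: "a \<noteq> (0,0)" "b \<noteq> (0,0)" by (auto simp: det2_def)
  have det: "det2 (F a) (F b) \<noteq> 0"
    using distinct F nz pt_eq_iff unfolding c by metis
  then have "polar p2 p1 p0 a b = 0" "polar q2 q1 q0 a b = 0"
    using polar_eq_zero_if_jacobian_eq_zero critical_point_jacobian[OF lift] crit nz
    unfolding c F_def by blast+
  note F_lincomb = lift_in_polar_free_basis[OF D this, folded F_def]
  define s t u w where "s = det2 (F a) b" "t = det2 a (F a)" "u = det2 (F b) b" "w = det2 a (F b)"
  have "det2 (F a) (F b) = (s * w - t * u) * det2 a b"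
    using det2_lincomb[of a b "(s,t)" "(u,w)"] lincomb_coords[OF D]
    unfolding s_t_u_w_def by (simp add: det2_def)
  then have "s * w - t * u \<noteq> 0" using det by auto
  moreover have "f (coord_pt a b x) = coord_pt a b (normal_quad s t u w x)" if "x \<noteq> (0,0)" for x
    using F F_lincomb lincomb_nonzero D that unfolding coord_pt_def s_t_u_w_def by simp
  ultimately have "quadratic_normal_form f a b s t u w"
    using D by unfold_locales
  then show ?thesis
    using that c coord_pt_basis by metis
qed

section \<open>The Klein four-group\<close>

lemma V4_carrier: "carrier V4 = {0,1} \<times> {0,1}"
  unfolding V4_def DirProd_def by (auto simp: carrier_integer_mod_group)

lemma V4_mult: "mult V4 p q = ((fst p + fst q) mod 2, (snd p + snd q) mod 2)"
  unfolding V4_def DirProd_def integer_mod_group_def by (auto split: prod.splits)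

lemma commuting_involutions_group:
  fixes i j :: "'a \<Rightarrow> 'a"
  assumes ii: "i \<circ> i = id" and jj: "j \<circ> j = id" and ij: "i \<circ> j = j \<circ> i"
  shows "group \<lparr>carrier = {id, i, j, i \<circ> j}, mult = (\<circ>), one = id\<rparr>" (is "group ?G")
proof -
  have "i \<circ> (i \<circ> h) = h" "j \<circ> (j \<circ> h) = h" "j \<circ> (i \<circ> h) = i \<circ> (j \<circ> h)" for h
    using ii jj ij by (metis comp_assoc id_comp)+
  note rules = ii jj this ij[symmetric] comp_assoc
  show ?thesis
  proof (rule groupI)
    fix x y assume "x \<in> carrier ?G" "y \<in> carrier ?G"
    then show "x \<otimes>\<^bsub>?G\<^esub> y \<in> carrier ?G" by (auto simp: rules)
  next
    fix x assume "x \<in> carrier ?G"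
    then show "\<exists>y\<in>carrier ?G. y \<otimes>\<^bsub>?G\<^esub> x = \<one>\<^bsub>?G\<^esub>"
      by (intro bexI[of _ x]) (auto simp: rules)
  qed (simp_all add: comp_assoc)
qed

lemma commuting_involutions_iso_V4:
  fixes i j :: "'a \<Rightarrow> 'a"
  assumes ii: "i \<circ> i = id" and jj: "j \<circ> j = id" and ij: "i \<circ> j = j \<circ> i"
    and distinct: "i \<noteq> id" "j \<noteq> id" "i \<circ> j \<noteq> id" "i \<noteq> j" "i \<noteq> i \<circ> j" "j \<noteq> i \<circ> j"
  shows "\<lparr>carrier = {id, i, j, i \<circ> j}, mult = (\<circ>), one = id\<rparr> \<cong> V4" (is "?G \<cong> V4")
proof -
  have "i \<circ> (i \<circ> h) = h" "j \<circ> (j \<circ> h) = h" "j \<circ> (i \<circ> h) = i \<circ> (j \<circ> h)" for h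
    using ii jj ij by (metis comp_assoc id_comp)+
  note rules = ii jj this ij[symmetric] comp_assoc
  define h where "h p = (if fst p = 1 then i else id) \<circ> (if snd p = 1 then j else id)" for p :: "int \<times> int"
  have "h \<in> hom V4 ?G"
  proof (rule homI)
    fix x assume "x \<in> carrier V4"
    then show "h x \<in> carrier ?G" unfolding V4_carrier h_def by auto
  next
    fix x y assume "x \<in> carrier V4" "y \<in> carrier V4"
    then have "x \<in> {(0,0),(0,1),(1,0),(1,1)}" "y \<in> {(0,0),(0,1),(1,0),(1,1)}" unfolding V4_carrier by auto
    then show "h (x \<otimes>\<^bsub>V4\<^esub> y) = h x \<otimes>\<^bsub>?G\<^esub> h y" unfolding h_def V4_mult
      by (elim insertE emptyE; simp only: monoid.simps fst_conv snd_conv; simp add: rules)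
  qed
  moreover have "bij_betw h (carrier V4) (carrier ?G)"
  proof -
    have "h ` ({0,1} \<times> {0,1}) = {id, i, j, i \<circ> j}" unfolding h_def by auto
    moreover have "inj_on h ({0,1} \<times> {0,1})" unfolding inj_on_def h_def using distinct by auto
    ultimately show ?thesis unfolding bij_betw_def V4_carrier by simp
  qed
  ultimately have "V4 \<cong> ?G" unfolding is_iso_def iso_def by blast
  moreover have "group V4" unfolding V4_def by (intro DirProd_group group_integer_mod_group)
  ultimately show ?thesis using group.iso_sym by blast
qed

section \<open>Critically coalescing maps in normal form\<close>

lemma normal_quad_nonzero:
  assumes "s * w - t * u \<noteq> 0" "x \<noteq> (0,0)"
  shows "normal_quad s t u w x \<noteq> (0,0)"
proof
  assume "normal_quad s t u w x = (0,0)"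
  then have e: "s * fst x^2 + u * snd x^2 = 0" "t * fst x^2 + w * snd x^2 = 0"
    by (auto simp: normal_quad_def)
  have "(s * w - t * u) * fst x^2 = w * (s * fst x^2 + u * snd x^2) - u * (t * fst x^2 + w * snd x^2)"
    "(s * w - t * u) * snd x^2 = s * (t * fst x^2 + w * snd x^2) - t * (s * fst x^2 + u * snd x^2)"
    by (simp_all add: algebra_simps)
  then show False using e assms by (cases x) simp
qed

lemma det2_normal_quad:
  "det2 (normal_quad s t u w y) (normal_quad s t u w x) =
     - (s * w - t * u) * det2 y x * det2 y (lin2 1 0 0 (-1) x)"
  unfolding normal_quad_def det2_def lin2_def by (simp add: algebra_simps power2_eq_square)

text \<open>Under the coalescing condition sw + tu = 0 the factor det(g y, I (g x)) splits into two
  further determinants, so g(g y) and g(g x) are proportional iff y is proportional to x, I x, S x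
  or I S x, where I = diag(1, -1) and S = ((0, u), (s, 0)).\<close>
lemma det2_normal_quad_twice:
  assumes coalescing: "s * w + t * u = 0"
  shows "s * det2 (normal_quad s t u w (normal_quad s t u w y)) (normal_quad s t u w (normal_quad s t u w x)) =
    2 * t * (s * w - t * u)^2 * det2 y x * det2 y (lin2 1 0 0 (-1) x) * det2 y (lin2 0 u s 0 x) * det2 y (lin2 0 u (-s) 0 x)"
proof -
  let ?g = "normal_quad s t u w"
  have flip: "s * det2 (?g y) (lin2 1 0 0 (-1) (?g x)) =
      2 * t * det2 y (lin2 0 u s 0 x) * det2 y (lin2 0 u (-s) 0 x)"
  proof -
    obtain x1 x2 y1 y2 where xy: "x = (x1,x2)" "y = (y1,y2)" by force
    show ?thesis
      using coalescing unfolding xy normal_quad_def det2_def lin2_def fst_conv snd_conv by algebra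
  qed
  have "s * det2 (?g (?g y)) (?g (?g x)) =
      - (s * w - t * u) * det2 (?g y) (?g x) * (s * det2 (?g y) (lin2 1 0 0 (-1) (?g x)))"
    unfolding det2_normal_quad[of s t u w "?g y"] by (simp add: algebra_simps)
  also have "\<dots> = (s * w - t * u)^2 * det2 y x * det2 y (lin2 1 0 0 (-1) x) *
      (2 * t * det2 y (lin2 0 u s 0 x) * det2 y (lin2 0 u (-s) 0 x))"
    unfolding flip det2_normal_quad by (simp add: algebra_simps power2_eq_square)
  finally show ?thesis by (simp add: algebra_simps)
qed

lemma qform_prod_eq_zero:
  assumes "\<forall>x. x \<noteq> (0,0) \<longrightarrow> qform a2 a1 a0 x * qform b2 b1 b0 x * qform c2 c1 c0 x * qform d2 d1 d0 x = 0"
  shows "(a2 = 0 \<and> a1 = 0 \<and> a0 = 0) \<or> (b2 = 0 \<and> b1 = 0 \<and> b0 = 0) \<or>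
    (c2 = 0 \<and> c1 = 0 \<and> c0 = 0) \<or> (d2 = 0 \<and> d1 = 0 \<and> d0 = 0)"
proof -
  have "poly ([:a0,a1,a2:] * [:b0,b1,b2:] * [:c0,c1,c2:] * [:d0,d1,d2:]) z = 0" for z
  proof -
    have "qform a2 a1 a0 (z,1) * qform b2 b1 b0 (z,1) * qform c2 c1 c0 (z,1) * qform d2 d1 d0 (z,1) = 0"
      using assms by simp
    then show ?thesis unfolding qform_poly poly_mult .
  qed
  then have "[:a0,a1,a2:] * [:b0,b1,b2:] * [:c0,c1,c2:] * [:d0,d1,d2:] = 0"
    using poly_all_0_iff_0 by blast
  then show ?thesis by (simp only: mult_eq_0_iff pCons_eq_0_iff) blast
qed

lemma linear_in_basis_cases:
  assumes "det2 a b = 1" "linear_in_basis a b \<tau> n1 n2 n3 n4"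
    and \<rho>: "linear_in_basis a b \<rho>\<^sub>1 p1 p2 p3 p4" "linear_in_basis a b \<rho>\<^sub>2 q1 q2 q3 q4"
      "linear_in_basis a b \<rho>\<^sub>3 r1 r2 r3 r4" "linear_in_basis a b \<rho>\<^sub>4 m1 m2 m3 m4"
    and "\<forall>x. x \<noteq> (0,0) \<longrightarrow>
      det2 (lin2 n1 n2 n3 n4 x) (lin2 p1 p2 p3 p4 x) * det2 (lin2 n1 n2 n3 n4 x) (lin2 q1 q2 q3 q4 x) *
      det2 (lin2 n1 n2 n3 n4 x) (lin2 r1 r2 r3 r4 x) * det2 (lin2 n1 n2 n3 n4 x) (lin2 m1 m2 m3 m4 x) = 0"
  shows "\<tau> = \<rho>\<^sub>1 \<or> \<tau> = \<rho>\<^sub>2 \<or> \<tau> = \<rho>\<^sub>3 \<or> \<tau> = \<rho>\<^sub>4"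
  using qform_prod_eq_zero[OF assms(7)[unfolded det2_lin2_lin2]]
  unfolding linear_in_basis_eq_iff[OF assms(1,2) \<rho>(1)] linear_in_basis_eq_iff[OF assms(1,2) \<rho>(2)]
    linear_in_basis_eq_iff[OF assms(1,2) \<rho>(3)] linear_in_basis_eq_iff[OF assms(1,2) \<rho>(4)] .

context quadratic_normal_form
begin

abbreviation \<psi> :: "complex \<times> complex \<Rightarrow> riem" where "\<psi> \<equiv> coord_pt a b"
abbreviation g :: "complex \<times> complex \<Rightarrow> complex \<times> complex" where "g \<equiv> normal_quad s t u w"

lemma lift_twice: "x \<noteq> (0,0) \<Longrightarrow> f (f (\<psi> x)) = \<psi> (g (g x))"
  using lift normal_quad_nonzero[OF nondegenerate] by simp

lemma coord_pt_in_preimage_iff: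
  "x \<noteq> (0,0) \<Longrightarrow> y \<noteq> (0,0) \<Longrightarrow> \<psi> x \<in> f -` {\<psi> y} \<longleftrightarrow> det2 (g x) y = 0"
  using lift coord_pt_eq_iff[OF unimodular] normal_quad_nonzero[OF nondegenerate] by simp

lemma coalescing_iff: "f (f (\<psi> (1,0))) = f (f (\<psi> (0,1))) \<longleftrightarrow> s * w + t * u = 0"
proof -
  have g: "g (1,0) = (s,t)" "g (0,1) = (u,w)" by (simp_all add: normal_quad_def)
  then have nz: "(s,t) \<noteq> (0,0)" "(u,w) \<noteq> (0,0)"
    using normal_quad_nonzero[OF nondegenerate] by (metis zero_neq_one prod.inject)+
  have "f (f (\<psi> (1,0))) = f (f (\<psi> (0,1))) \<longleftrightarrow> det2 (g (s,t)) (g (u,w)) = 0"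
    using lift_twice g coord_pt_eq_iff[OF unimodular] normal_quad_nonzero[OF nondegenerate] nz by simp
  also have "det2 (g (s,t)) (g (u,w)) = (s * w - t * u)^2 * (s * w + t * u)"
    unfolding det2_normal_quad by (simp add: det2_def lin2_def power2_eq_square algebra_simps)
  finally show ?thesis using nondegenerate by simp
qed

end

locale coalescing_normal_form = quadratic_normal_form +
  assumes coalescing: "s * w + t * u = 0"
begin

lemma coefficients_nonzero: "s \<noteq> 0" "t \<noteq> 0" "u \<noteq> 0" "w \<noteq> 0"
proof -
  have "s * w - t * u = - 2 * t * u" "s * w - t * u = 2 * s * w"
    using coalescing by (simp_all add: algebra_simps add_eq_0_iff2)
  then show "s \<noteq> 0" "t \<noteq> 0" "u \<noteq> 0" "w \<noteq> 0"
    using nondegenerate by auto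
qed

definition \<iota> :: "riem \<Rightarrow> riem" where "\<iota> = basis_mobius a b 1 0 0 (-1)"
definition \<sigma> :: "riem \<Rightarrow> riem" where "\<sigma> = basis_mobius a b 0 u s 0"

lemma linear_\<iota>: "linear_in_basis a b \<iota> 1 0 0 (-1)"
  unfolding \<iota>_def using basis_mobius(2)[OF unimodular] by simp

lemma linear_\<sigma>: "linear_in_basis a b \<sigma> 0 u s 0"
  unfolding \<sigma>_def using basis_mobius(2)[OF unimodular] coefficients_nonzero by simp

lemma linear_\<iota>\<sigma>: "linear_in_basis a b (\<iota> \<circ> \<sigma>) 0 u (-s) 0"
  using linear_in_basis_comp[OF linear_\<iota> linear_\<sigma>] by simp

lemma involutions: "\<iota> \<circ> \<iota> = id" "\<sigma> \<circ> \<sigma> = id" "\<iota> \<circ> \<sigma> = \<sigma> \<circ> \<iota>"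
  using linear_in_basis_eq_iff[OF unimodular linear_in_basis_comp[OF linear_\<iota> linear_\<iota>] linear_in_basis_id]
    linear_in_basis_eq_iff[OF unimodular linear_in_basis_comp[OF linear_\<sigma> linear_\<sigma>] linear_in_basis_id]
    linear_in_basis_eq_iff[OF unimodular linear_\<iota>\<sigma> linear_in_basis_comp[OF linear_\<sigma> linear_\<iota>]]
  by simp_all

lemma involutions_distinct: "\<iota> \<noteq> id" "\<sigma> \<noteq> id" "\<iota> \<circ> \<sigma> \<noteq> id" "\<iota> \<noteq> \<sigma>" "\<iota> \<noteq> \<iota> \<circ> \<sigma>" "\<sigma> \<noteq> \<iota> \<circ> \<sigma>"
  using linear_in_basis_eq_iff[OF unimodular linear_\<iota> linear_in_basis_id]
    linear_in_basis_eq_iff[OF unimodular linear_\<sigma> linear_in_basis_id]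
    linear_in_basis_eq_iff[OF unimodular linear_\<iota>\<sigma> linear_in_basis_id]
    linear_in_basis_eq_iff[OF unimodular linear_\<iota> linear_\<sigma>]
    linear_in_basis_eq_iff[OF unimodular linear_\<iota> linear_\<iota>\<sigma>]
    linear_in_basis_eq_iff[OF unimodular linear_\<sigma> linear_\<iota>\<sigma>]
    coefficients_nonzero
  by simp_all

lemma deck_transformation_iff:
  assumes \<tau>: "linear_in_basis a b \<tau> n1 n2 n3 n4"
  shows "(f \<circ> f) \<circ> \<tau> = f \<circ> f \<longleftrightarrow> (\<forall>x. x \<noteq> (0,0) \<longrightarrow>
    det2 (lin2 n1 n2 n3 n4 x) (lin2 1 0 0 1 x) * det2 (lin2 n1 n2 n3 n4 x) (lin2 1 0 0 (-1) x) *
    det2 (lin2 n1 n2 n3 n4 x) (lin2 0 u s 0 x) * det2 (lin2 n1 n2 n3 n4 x) (lin2 0 u (-s) 0 x) = 0)"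
proof -
  have "f (f (\<tau> (\<psi> x))) = f (f (\<psi> x)) \<longleftrightarrow>
    det2 (lin2 n1 n2 n3 n4 x) (lin2 1 0 0 1 x) * det2 (lin2 n1 n2 n3 n4 x) (lin2 1 0 0 (-1) x) *
    det2 (lin2 n1 n2 n3 n4 x) (lin2 0 u s 0 x) * det2 (lin2 n1 n2 n3 n4 x) (lin2 0 u (-s) 0 x) = 0"
    if x: "x \<noteq> (0,0)" for x
  proof -
    let ?y = "lin2 n1 n2 n3 n4 x"
    have y: "?y \<noteq> (0,0)" using lin2_nonzero linear_in_basisD(1)[OF \<tau>] x by blast
    have "f (f (\<tau> (\<psi> x))) = f (f (\<psi> x)) \<longleftrightarrow> det2 (g (g ?y)) (g (g x)) = 0"
      using linear_in_basisD(2)[OF \<tau> x] lift_twice x y coord_pt_eq_iff[OF unimodular]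
        normal_quad_nonzero[OF nondegenerate] by simp
    also have "\<dots> \<longleftrightarrow> s * det2 (g (g ?y)) (g (g x)) = 0"
      using coefficients_nonzero by simp
    finally show ?thesis
      unfolding det2_normal_quad_twice[OF coalescing]
      using coefficients_nonzero nondegenerate by (simp add: lin2_def)
  qed
  then show ?thesis
    using coord_pt_ext[OF unimodular, of "(f \<circ> f) \<circ> \<tau>" "f \<circ> f"] by (auto simp: fun_eq_iff)
qed

lemma Deck_eq: "Deck (f \<circ> f) = {id, \<iota>, \<sigma>, \<iota> \<circ> \<sigma>}"
proof
  show "Deck (f \<circ> f) \<subseteq> {id, \<iota>, \<sigma>, \<iota> \<circ> \<sigma>}"
  proof
    fix \<tau> assume "\<tau> \<in> Deck (f \<circ> f)"
    then have "is_mobius \<tau>" "(f \<circ> f) \<circ> \<tau> = f \<circ> f" unfolding Deck_def by auto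
    then obtain n1 n2 n3 n4 where \<tau>: "linear_in_basis a b \<tau> n1 n2 n3 n4"
      and "(f \<circ> f) \<circ> \<tau> = f \<circ> f" using mobius_linear_in_basis[OF unimodular] by metis
    then show "\<tau> \<in> {id, \<iota>, \<sigma>, \<iota> \<circ> \<sigma>}"
      using linear_in_basis_cases[OF unimodular \<tau> linear_in_basis_id linear_\<iota> linear_\<sigma> linear_\<iota>\<sigma>]
      unfolding deck_transformation_iff[OF \<tau>] by blast
  qed
next
  have "\<iota> \<circ> \<sigma> = basis_mobius a b 0 u (-s) 0"
    using linear_in_basis_eq_iff[OF unimodular linear_\<iota>\<sigma> basis_mobius(2)[OF unimodular]]
      coefficients_nonzero by simp
  then have mobius: "is_mobius \<rho>" if "\<rho> \<in> {id, \<iota>, \<sigma>, \<iota> \<circ> \<sigma>}" for \<rho>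
    using that is_mobius_id basis_mobius(1)[OF unimodular] coefficients_nonzero
    unfolding \<iota>_def \<sigma>_def by auto
  have "(f \<circ> f) \<circ> \<rho> = f \<circ> f" if "\<rho> \<in> {id, \<iota>, \<sigma>, \<iota> \<circ> \<sigma>}" for \<rho>
    using that deck_transformation_iff[OF linear_in_basis_id] deck_transformation_iff[OF linear_\<iota>]
      deck_transformation_iff[OF linear_\<sigma>] deck_transformation_iff[OF linear_\<iota>\<sigma>] by auto
  then show "{id, \<iota>, \<sigma>, \<iota> \<circ> \<sigma>} \<subseteq> Deck (f \<circ> f)"
    using mobius unfolding Deck_def by blast
qed

lemma Deck_group_iso_V4: "group (Deck_group (f \<circ> f)) \<and> Deck_group (f \<circ> f) \<cong> V4"
  using commuting_involutions_group[OF involutions]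
    commuting_involutions_iso_V4[OF involutions involutions_distinct]
  unfolding Deck_group_def Deck_eq by simp

lemma fixed_points_\<iota>: "fixed_points \<iota> = {\<psi> (1,0), \<psi> (0,1)}"
proof (rule coord_pt_set_eqI[OF unimodular])
  fix x :: "complex \<times> complex" assume x: "x \<noteq> (0,0)"
  have "\<psi> x \<in> fixed_points \<iota> \<longleftrightarrow> fst x * snd x = 0"
    using linear_in_basis_fixed_iff[OF unimodular linear_\<iota> x] unfolding fixed_points_def
    by (simp add: det2_def lin2_def)
  also have "\<dots> \<longleftrightarrow> \<psi> x \<in> {\<psi> (1,0), \<psi> (0,1)}"
    using coord_pt_eq_iff[OF unimodular x] by (auto simp: det2_def)
  finally show "\<psi> x \<in> fixed_points \<iota> \<longleftrightarrow> \<psi> x \<in> {\<psi> (1,0), \<psi> (0,1)}" .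
qed

lemma fixed_points_\<sigma>: "fixed_points \<sigma> = f -` {\<psi> (1,0)}"
proof (rule coord_pt_set_eqI[OF unimodular])
  fix x :: "complex \<times> complex" assume x: "x \<noteq> (0,0)"
  have "w * (u * snd x^2 - s * fst x^2) - u * (t * fst x^2 + w * snd x^2) = - (fst x^2 * (s * w + t * u))"
    by (simp add: algebra_simps)
  then have "w * (u * snd x^2 - s * fst x^2) = u * (t * fst x^2 + w * snd x^2)"
    using coalescing by simp
  then have "u * snd x^2 - s * fst x^2 = 0 \<longleftrightarrow> t * fst x^2 + w * snd x^2 = 0"
    using coefficients_nonzero by (metis mult_eq_0_iff)
  then show "\<psi> x \<in> fixed_points \<sigma> \<longleftrightarrow> \<psi> x \<in> f -` {\<psi> (1,0)}"
    using linear_in_basis_fixed_iff[OF unimodular linear_\<sigma> x] coord_pt_in_preimage_iff[OF x]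
    unfolding fixed_points_def by (simp add: det2_def lin2_def normal_quad_def power2_eq_square mult.assoc)
qed

lemma fixed_points_\<iota>\<sigma>: "fixed_points (\<iota> \<circ> \<sigma>) = f -` {\<psi> (0,1)}"
proof (rule coord_pt_set_eqI[OF unimodular])
  fix x :: "complex \<times> complex" assume x: "x \<noteq> (0,0)"
  show "\<psi> x \<in> fixed_points (\<iota> \<circ> \<sigma>) \<longleftrightarrow> \<psi> x \<in> f -` {\<psi> (0,1)}"
    using linear_in_basis_fixed_iff[OF unimodular linear_\<iota>\<sigma> x] coord_pt_in_preimage_iff[OF x]
    unfolding fixed_points_def by (simp add: det2_def lin2_def normal_quad_def power2_eq_square algebra_simps)
qed

lemma special_pairs_Deck:
  "special_pairs (Deck (f \<circ> f)) = {{\<psi> (1,0), \<psi> (0,1)}, f -` {\<psi> (1,0)}, f -` {\<psi> (0,1)}}"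
  using involutions_distinct unfolding special_pairs_def Deck_eq fixed_points_\<iota>[symmetric]
    fixed_points_\<sigma>[symmetric] fixed_points_\<iota>\<sigma>[symmetric]
  by auto

end

theorem mainTheorem15:
  fixes f :: "riem \<Rightarrow> riem" and c\<^sub>1 c\<^sub>2 :: riem
  assumes quad: "rational_map_deg 2 f"
    and crit: "{c. critical_point f c} = {c\<^sub>1, c\<^sub>2}"
    and distinct_cv: "f c\<^sub>1 \<noteq> f c\<^sub>2"
    and coalesce: "f (f c\<^sub>1) = f (f c\<^sub>2)"
  shows "group (Deck_group (f \<circ> f)) \<and> Deck_group (f \<circ> f) \<cong> V4
         \<and> special_pairs (Deck (f \<circ> f)) = {{c\<^sub>1, c\<^sub>2}, f -` {c\<^sub>1}, f -` {c\<^sub>2}}"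
proof -
  have "critical_point f c\<^sub>1" "critical_point f c\<^sub>2" using crit by blast+
  then obtain a b s t u w where nf: "quadratic_normal_form f a b s t u w"
    and c: "c\<^sub>1 = coord_pt a b (1,0)" "c\<^sub>2 = coord_pt a b (0,1)"
    using critical_normal_form[OF quad _ _ distinct_cv] by metis
  then have "s * w + t * u = 0"
    using quadratic_normal_form.coalescing_iff coalesce by metis
  then interpret coalescing_normal_form f a b s t u w
    using nf by (simp add: coalescing_normal_form_def coalescing_normal_form_axioms_def)
  show ?thesis
    using Deck_group_iso_V4 special_pairs_Deck unfolding c by simp
qed

end
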